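(* For $D\in\mathbb N$ let $\Pi_D$ be the law of $f=D^{-1/2}\sum_{j=1}^DZ_j\varphi_j$ and let $\mathbb H_D$ be its RKHS. Then for any $\epsilon>0$, any $f_0\in\mathcal S^\beta(L)$ and any $D\ge(L/\epsilon)^{d/\beta}$, \[\inf_{h\in\mathbb H_D:\|h-f_0\|\le\epsilon}\|h\|_{\mathbb H_D}^2\le D\|f_0\|^2.\]
   Context: $G$ is a probability distribution on $\mathcal X\subseteq\mathbb R^d$, $\|\cdot\|$ the norm of $L^2(\mathcal X,G)$, $(\varphi_j)_{j\in\mathbb N}$ an orthonormal basis of $L^2(\mathcal X,G)$, $Z_j$ i.i.d. $\mathcal N(0,1)$, $\beta>0$, $L>0$. $\mathcal S^\beta(L)=\{g\in L^2(\mathcal X,G):\sum_j j^{2\beta/d}\langle g,\varphi_j\rangle^2\le L^2\}$. The RKHS $\mathbb H_D$ is the span of $\varphi_1,\dots,\varphi_D$ with norm $\|h\|_{\mathbb H_D}^2=D\sum_{j=1}^D\langle h,\varphi_j\rangle^2$. *)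

theory Defs
  imports "HOL-Probability.Probability"
begin

definition L2 :: "'x measure \<Rightarrow> ('x \<Rightarrow> real) set" where
  "L2 G = {f. f \<in> borel_measurable G \<and> integrable G (\<lambda>x. (f x)\<^sup>2)}"

definition l2inner :: "'x measure \<Rightarrow> ('x \<Rightarrow> real) \<Rightarrow> ('x \<Rightarrow> real) \<Rightarrow> real" where
  "l2inner G f g = (\<integral>x. f x * g x \<partial>G)"

definition l2norm :: "'x measure \<Rightarrow> ('x \<Rightarrow> real) \<Rightarrow> real" where
  "l2norm G f = sqrt (\<integral>x. (f x)\<^sup>2 \<partial>G)"

definition orthonormal_basis_L2 :: "'x measure \<Rightarrow> (nat \<Rightarrow> 'x \<Rightarrow> real) \<Rightarrow> bool" where
  "orthonormal_basis_L2 G \<phi> \<longleftrightarrow>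
     (\<forall>j\<ge>1. \<phi> j \<in> L2 G) \<and>
     (\<forall>i\<ge>1. \<forall>j\<ge>1. l2inner G (\<phi> i) (\<phi> j) = (if i = j then 1 else 0)) \<and>
     (\<forall>g \<in> L2 G. (\<lambda>n. l2norm G (\<lambda>x. g x - (\<Sum>j=1..n. l2inner G g (\<phi> j) * \<phi> j x)))
                    \<longlonglongrightarrow> 0)"

definition sobolev_class ::
  "'x measure \<Rightarrow> (nat \<Rightarrow> 'x \<Rightarrow> real) \<Rightarrow> nat \<Rightarrow> real \<Rightarrow> real \<Rightarrow> ('x \<Rightarrow> real) set" where
  "sobolev_class G \<phi> d \<beta> L =
     {g \<in> L2 G. summable (\<lambda>j. real (Suc j) powr (2 * \<beta> / d) * (l2inner G g (\<phi> (Suc j)))\<^sup>2)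
               \<and> (\<Sum>j. real (Suc j) powr (2 * \<beta> / d) * (l2inner G g (\<phi> (Suc j)))\<^sup>2) \<le> L\<^sup>2}"

definition RKHS_D :: "(nat \<Rightarrow> 'x \<Rightarrow> real) \<Rightarrow> nat \<Rightarrow> ('x \<Rightarrow> real) set" where
  "RKHS_D \<phi> D = {h. \<exists>c. h = (\<lambda>x. \<Sum>j=1..D. c j * \<phi> j x)}"

definition RKHS_D_norm_sq :: "'x measure \<Rightarrow> (nat \<Rightarrow> 'x \<Rightarrow> real) \<Rightarrow> nat \<Rightarrow> ('x \<Rightarrow> real) \<Rightarrow> real" where
  "RKHS_D_norm_sq G \<phi> D h = real D * (\<Sum>j=1..D. (l2inner G h (\<phi> j))\<^sup>2)"

end

theory Submission
  imports Defs
begin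

text \<open>The witness is the truncated Fourier expansion \<open>h = \<Sum>\<^sub>j\<^sub>\<le>\<^sub>D \<langle>f\<^sub>0,\<phi>\<^sub>j\<rangle> \<phi>\<^sub>j\<close>.
  Its RKHS norm is \<open>D \<Sum>\<^sub>j\<^sub>\<le>\<^sub>D \<langle>f\<^sub>0,\<phi>\<^sub>j\<rangle>\<^sup>2 \<le> D \<parallel>f\<^sub>0\<parallel>\<^sup>2\<close> by Bessel's inequality, and by
  Parseval its squared distance to \<open>f\<^sub>0\<close> is the tail \<open>\<Sum>\<^sub>j\<^sub>>\<^sub>D \<langle>f\<^sub>0,\<phi>\<^sub>j\<rangle>\<^sup>2\<close>.  Since the
  weights \<open>j\<^bsup>2\<beta>/d\<^esup>\<close> increase, the Sobolev condition bounds this tail by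
  \<open>L\<^sup>2 D\<^bsup>-2\<beta>/d\<^esup>\<close>, which is at most \<open>\<epsilon>\<^sup>2\<close> as soon as \<open>D \<ge> (L/\<epsilon>)\<^bsup>d/\<beta>\<^esup>\<close>.\<close>

definition fourier_partial_sum ::
  "'x measure \<Rightarrow> (nat \<Rightarrow> 'x \<Rightarrow> real) \<Rightarrow> nat \<Rightarrow> ('x \<Rightarrow> real) \<Rightarrow> 'x \<Rightarrow> real" where
  "fourier_partial_sum G \<phi> n f = (\<lambda>x. \<Sum>j=1..n. l2inner G f (\<phi> j) * \<phi> j x)"

lemma L2_mult_integrable:
  assumes "f \<in> L2 G" "g \<in> L2 G"
  shows "integrable G (\<lambda>x. f x * g x)"
proof (rule Bochner_Integration.integrable_bound[where f="\<lambda>x. (f x)\<^sup>2 + (g x)\<^sup>2"])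
  show "integrable G (\<lambda>x. (f x)\<^sup>2 + (g x)\<^sup>2)" "(\<lambda>x. f x * g x) \<in> borel_measurable G"
    using assms by (auto simp: L2_def)
  have "\<bar>f x * g x\<bar> \<le> (f x)\<^sup>2 + (g x)\<^sup>2" for x
  proof -
    have "2 * (\<bar>f x\<bar> * \<bar>g x\<bar>) \<le> (f x)\<^sup>2 + (g x)\<^sup>2"
      using sum_squares_bound[of "\<bar>f x\<bar>" "\<bar>g x\<bar>"] by (simp add: mult.assoc)
    moreover have "0 \<le> \<bar>f x\<bar> * \<bar>g x\<bar>"
      by simp
    ultimately show ?thesis
      unfolding abs_mult by linarith
  qed
  then show "AE x in G. norm (f x * g x) \<le> norm ((f x)\<^sup>2 + (g x)\<^sup>2)"
    by simp
qed

lemma l2norm_diff_commute: "l2norm G (\<lambda>x. f x - g x) = l2norm G (\<lambda>x. g x - f x)"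
  by (simp add: l2norm_def power2_commute)

lemma l2norm_sq: "(l2norm G f)\<^sup>2 = (\<integral>x. (f x)\<^sup>2 \<partial>G)"
  by (simp add: l2norm_def integral_nonneg_AE)

lemma l2inner_basis_expansion:
  assumes onb: "orthonormal_basis_L2 G \<phi>" and j: "j \<in> {1..n}"
  shows "l2inner G (\<lambda>x. \<Sum>i=1..n. c i * \<phi> i x) (\<phi> j) = c j"
proof -
  have integrable: "integrable G (\<lambda>x. \<phi> i x * \<phi> j x)" if "i \<in> {1..n}" for i
    using onb that j by (intro L2_mult_integrable) (auto simp: orthonormal_basis_L2_def)
  have "l2inner G (\<lambda>x. \<Sum>i=1..n. c i * \<phi> i x) (\<phi> j)
      = (\<Sum>i=1..n. c i * (\<integral>x. \<phi> i x * \<phi> j x \<partial>G))"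
    using integrable by (simp add: l2inner_def sum_distrib_right mult.assoc integral_sum)
  also have "\<dots> = (\<Sum>i=1..n. if i = j then c i else 0)"
    using onb j by (intro sum.cong refl) (auto simp: orthonormal_basis_L2_def l2inner_def)
  also have "\<dots> = c j"
    using j by simp
  finally show ?thesis .
qed

lemma fourier_partial_sum_in_RKHS_D: "fourier_partial_sum G \<phi> D f \<in> RKHS_D \<phi> D"
  unfolding RKHS_D_def fourier_partial_sum_def by (intro CollectI exI) (rule refl)

lemma RKHS_D_norm_sq_fourier_partial_sum:
  assumes "orthonormal_basis_L2 G \<phi>"
  shows "RKHS_D_norm_sq G \<phi> D (fourier_partial_sum G \<phi> D f)
           = real D * (\<Sum>j=1..D. (l2inner G f (\<phi> j))\<^sup>2)"
  unfolding RKHS_D_norm_sq_def fourier_partial_sum_def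
  using l2inner_basis_expansion[OF assms] by simp

lemma l2norm_fourier_remainder_sq:
  assumes onb: "orthonormal_basis_L2 G \<phi>" and f: "f \<in> L2 G"
  shows "(l2norm G (\<lambda>x. f x - fourier_partial_sum G \<phi> n f x))\<^sup>2
           = (l2norm G f)\<^sup>2 - (\<Sum>j=1..n. (l2inner G f (\<phi> j))\<^sup>2)"
proof -
  define a where "a j = l2inner G f (\<phi> j)" for j
  define A where "A = {1..n}"
  have \<phi>_L2: "\<phi> j \<in> L2 G" if "j \<in> A" for j
    using onb that by (auto simp: orthonormal_basis_L2_def A_def)
  have orth: "(\<integral>x. \<phi> i x * \<phi> j x \<partial>G) = (if i = j then 1 else 0)" if "i \<in> A" "j \<in> A" for i j
    using onb that by (auto simp: orthonormal_basis_L2_def A_def l2inner_def)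
  have integrable: "integrable G (\<lambda>x. (f x)\<^sup>2)"
    "\<And>j. j \<in> A \<Longrightarrow> integrable G (\<lambda>x. f x * \<phi> j x)"
    "\<And>i j. i \<in> A \<Longrightarrow> j \<in> A \<Longrightarrow> integrable G (\<lambda>x. \<phi> i x * \<phi> j x)"
    using f \<phi>_L2 by (auto simp: L2_mult_integrable) (simp add: L2_def)
  have expand: "(f x - (\<Sum>j\<in>A. a j * \<phi> j x))\<^sup>2 = (f x)\<^sup>2 - 2 * (\<Sum>j\<in>A. a j * (f x * \<phi> j x))
      + (\<Sum>i\<in>A. \<Sum>j\<in>A. a i * a j * (\<phi> i x * \<phi> j x))" for x
    by (simp add: power2_diff power2_eq_square sum_product sum_distrib_left algebra_simps)
  have "(\<integral>x. (f x - (\<Sum>j\<in>A. a j * \<phi> j x))\<^sup>2 \<partial>G)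
      = (\<integral>x. (f x)\<^sup>2 \<partial>G) - 2 * (\<Sum>j\<in>A. a j * (\<integral>x. f x * \<phi> j x \<partial>G))
      + (\<Sum>i\<in>A. \<Sum>j\<in>A. a i * a j * (\<integral>x. \<phi> i x * \<phi> j x \<partial>G))"
    unfolding expand using integrable by (simp add: integral_sum integrable_sum)
  also have "\<dots> = (\<integral>x. (f x)\<^sup>2 \<partial>G) - 2 * (\<Sum>j\<in>A. (a j)\<^sup>2) + (\<Sum>i\<in>A. \<Sum>j\<in>A. if j = i then a i * a j else 0)"
    by (intro arg_cong2[where f="(+)"] sum.cong refl) (simp_all add: orth a_def l2inner_def power2_eq_square)
  also have "\<dots> = (\<integral>x. (f x)\<^sup>2 \<partial>G) - (\<Sum>j\<in>A. (a j)\<^sup>2)"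
    by (simp add: A_def power2_eq_square)
  finally show ?thesis
    by (simp add: l2norm_sq fourier_partial_sum_def a_def A_def)
qed

lemma bessel_inequality:
  assumes "orthonormal_basis_L2 G \<phi>" "f \<in> L2 G"
  shows "(\<Sum>j=1..n. (l2inner G f (\<phi> j))\<^sup>2) \<le> (l2norm G f)\<^sup>2"
  using l2norm_fourier_remainder_sq[OF assms, of n] by (metis diff_ge_0_iff_ge zero_le_power2)

lemma parseval:
  assumes onb: "orthonormal_basis_L2 G \<phi>" and f: "f \<in> L2 G"
  shows "(\<lambda>n. \<Sum>j=1..n. (l2inner G f (\<phi> j))\<^sup>2) \<longlonglongrightarrow> (l2norm G f)\<^sup>2"
proof -
  have "(\<lambda>n. l2norm G (\<lambda>x. f x - fourier_partial_sum G \<phi> n f x)) \<longlonglongrightarrow> 0"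
    using onb f by (simp add: orthonormal_basis_L2_def fourier_partial_sum_def)
  then have "(\<lambda>n. (l2norm G (\<lambda>x. f x - fourier_partial_sum G \<phi> n f x))\<^sup>2) \<longlonglongrightarrow> 0"
    by (metis tendsto_power zero_power2)
  then have "(\<lambda>n. (l2norm G f)\<^sup>2 - (\<Sum>j=1..n. (l2inner G f (\<phi> j))\<^sup>2)) \<longlonglongrightarrow> 0"
    by (simp add: l2norm_fourier_remainder_sq[OF onb f])
  then have "(\<lambda>n. (l2norm G f)\<^sup>2 - ((l2norm G f)\<^sup>2 - (\<Sum>j=1..n. (l2inner G f (\<phi> j))\<^sup>2)))
      \<longlonglongrightarrow> (l2norm G f)\<^sup>2 - 0"
    by (intro tendsto_diff tendsto_const)
  then show ?thesis
    by simp
qed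

lemma powr_weighted_tail_le_suminf:
  fixes a :: "nat \<Rightarrow> real"
  assumes "p \<ge> 0" and summable: "summable (\<lambda>j. real (Suc j) powr p * (a (Suc j))\<^sup>2)"
  shows "real D powr p * (\<Sum>j=Suc D..n. (a j)\<^sup>2) \<le> (\<Sum>j. real (Suc j) powr p * (a (Suc j))\<^sup>2)"
proof -
  have "real D powr p * (\<Sum>j=Suc D..n. (a j)\<^sup>2) \<le> (\<Sum>j=Suc D..n. real j powr p * (a j)\<^sup>2)"
    unfolding sum_distrib_left using \<open>p \<ge> 0\<close>
    by (intro sum_mono mult_right_mono powr_mono2) auto
  also have "\<dots> \<le> (\<Sum>j=1..n. real j powr p * (a j)\<^sup>2)"
    by (intro sum_mono2) auto
  also have "\<dots> = (\<Sum>j<n. real (Suc j) powr p * (a (Suc j))\<^sup>2)"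
    by (simp add: sum.atLeast1_atMost_eq)
  also have "\<dots> \<le> (\<Sum>j. real (Suc j) powr p * (a (Suc j))\<^sup>2)"
    using summable by (intro sum_le_suminf) auto
  finally show ?thesis .
qed

lemma sobolev_class_tail_bound:
  assumes onb: "orthonormal_basis_L2 G \<phi>" and f: "f \<in> sobolev_class G \<phi> d \<beta> L" and "\<beta> \<ge> 0"
  shows "real D powr (2 * \<beta> / d) * ((l2norm G f)\<^sup>2 - (\<Sum>j=1..D. (l2inner G f (\<phi> j))\<^sup>2)) \<le> L\<^sup>2"
proof -
  define a where "a j = l2inner G f (\<phi> j)" for j
  define p where "p = 2 * \<beta> / d"
  have f_L2: "f \<in> L2 G"
    using f by (simp add: sobolev_class_def)
  have "p \<ge> 0"
    using \<open>\<beta> \<ge> 0\<close> by (simp add: p_def)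
  have summable: "summable (\<lambda>j. real (Suc j) powr p * (a (Suc j))\<^sup>2)"
    and sum_le: "(\<Sum>j. real (Suc j) powr p * (a (Suc j))\<^sup>2) \<le> L\<^sup>2"
    using f by (simp_all add: sobolev_class_def a_def p_def)
  have tail: "(\<Sum>j=1..n. (a j)\<^sup>2) - (\<Sum>j=1..D. (a j)\<^sup>2) = (\<Sum>j=Suc D..n. (a j)\<^sup>2)"
    if "D \<le> n" for n
  proof -
    have "{1..n} = {1..D} \<union> {Suc D..n}"
      using that by auto
    then show ?thesis
      by (simp add: sum.union_disjoint)
  qed
  have "(\<lambda>n. real D powr p * ((\<Sum>j=1..n. (a j)\<^sup>2) - (\<Sum>j=1..D. (a j)\<^sup>2)))
      \<longlonglongrightarrow> real D powr p * ((l2norm G f)\<^sup>2 - (\<Sum>j=1..D. (a j)\<^sup>2))"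
    using parseval[OF onb f_L2] unfolding a_def by (intro tendsto_intros)
  moreover have "real D powr p * ((\<Sum>j=1..n. (a j)\<^sup>2) - (\<Sum>j=1..D. (a j)\<^sup>2)) \<le> L\<^sup>2"
    if "D \<le> n" for n
    using powr_weighted_tail_le_suminf[OF \<open>p \<ge> 0\<close> summable, of D n] sum_le tail[OF that]
    by simp
  ultimately show ?thesis
    unfolding a_def p_def by (intro LIMSEQ_le_const2) auto
qed

lemma sq_le_powr_of_powr_le:
  fixes x y d \<beta> :: real
  assumes "x > 0" "d > 0" "\<beta> > 0" and "y \<ge> x powr (d / \<beta>)"
  shows "x\<^sup>2 \<le> y powr (2 * \<beta> / d)"
proof -
  have "x\<^sup>2 = (x powr (d / \<beta>)) powr (2 * \<beta> / d)"
    using assms(1-3) by (simp add: powr_powr powr_numeral)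
  also have "\<dots> \<le> y powr (2 * \<beta> / d)"
    using assms by (intro powr_mono2) auto
  finally show ?thesis .
qed

lemma l2norm_fourier_remainder_le:
  assumes onb: "orthonormal_basis_L2 G \<phi>" and f: "f \<in> sobolev_class G \<phi> d \<beta> L"
    and "d > 0" "\<beta> > 0" "L > 0" "\<epsilon> > 0" and D: "real D \<ge> (L / \<epsilon>) powr (d / \<beta>)"
  shows "l2norm G (\<lambda>x. fourier_partial_sum G \<phi> D f x - f x) \<le> \<epsilon>"
proof -
  define S where "S = (\<Sum>j=1..D. (l2inner G f (\<phi> j))\<^sup>2)"
  define p where "p = 2 * \<beta> / d"
  have f_L2: "f \<in> L2 G"
    using f by (simp add: sobolev_class_def)
  have "D > 0"
    using D \<open>L > 0\<close> \<open>\<epsilon> > 0\<close> by (smt (verit) divide_pos_pos of_nat_0_less_iff powr_gt_zero)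
  have "L\<^sup>2 \<le> \<epsilon>\<^sup>2 * real D powr p"
    using sq_le_powr_of_powr_le[of "L / \<epsilon>" d \<beta> "real D"] assms(3-7)
    by (simp add: p_def power_divide field_simps)
  moreover have "real D powr p * ((l2norm G f)\<^sup>2 - S) \<le> L\<^sup>2"
    using sobolev_class_tail_bound[OF onb f] \<open>\<beta> > 0\<close> by (simp add: p_def S_def)
  ultimately have "real D powr p * ((l2norm G f)\<^sup>2 - S) \<le> real D powr p * \<epsilon>\<^sup>2"
    using mult.commute[of "\<epsilon>\<^sup>2" "real D powr p"] by linarith
  then have "(l2norm G (\<lambda>x. f x - fourier_partial_sum G \<phi> D f x))\<^sup>2 \<le> \<epsilon>\<^sup>2"
    using \<open>D > 0\<close> by (simp add: l2norm_fourier_remainder_sq[OF onb f_L2] S_def)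
  then have "l2norm G (\<lambda>x. f x - fourier_partial_sum G \<phi> D f x) \<le> \<epsilon>"
    using power2_le_imp_le less_imp_le[OF \<open>\<epsilon> > 0\<close>] by blast
  then show ?thesis
    using l2norm_diff_commute[of G "fourier_partial_sum G \<phi> D f" f] by linarith
qed

theorem lemma11:
  fixes G :: "(real^'d) measure" and \<phi> :: "nat \<Rightarrow> real^'d \<Rightarrow> real"
    and \<beta> L \<epsilon> :: real and D :: nat and f\<^sub>0 :: "real^'d \<Rightarrow> real"
  assumes "prob_space G"
    and "orthonormal_basis_L2 G \<phi>"
    and "\<beta> > 0" and "L > 0" and "\<epsilon> > 0"
    and "f\<^sub>0 \<in> sobolev_class G \<phi> CARD('d) \<beta> L"
    and "real D \<ge> (L / \<epsilon>) powr (real CARD('d) / \<beta>)"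
  shows "Inf {RKHS_D_norm_sq G \<phi> D h | h. h \<in> RKHS_D \<phi> D \<and> l2norm G (\<lambda>x. h x - f\<^sub>0 x) \<le> \<epsilon>}
           \<le> real D * (l2norm G f\<^sub>0)\<^sup>2"
proof -
  let ?R = "{RKHS_D_norm_sq G \<phi> D h | h. h \<in> RKHS_D \<phi> D \<and> l2norm G (\<lambda>x. h x - f\<^sub>0 x) \<le> \<epsilon>}"
  define h where "h = fourier_partial_sum G \<phi> D f\<^sub>0"
  have f\<^sub>0_L2: "f\<^sub>0 \<in> L2 G"
    using assms(6) by (simp add: sobolev_class_def)
  have "l2norm G (\<lambda>x. h x - f\<^sub>0 x) \<le> \<epsilon>"
    unfolding h_def using assms(2-7) by (intro l2norm_fourier_remainder_le) auto
  then have "RKHS_D_norm_sq G \<phi> D h \<in> ?R"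
    using fourier_partial_sum_in_RKHS_D unfolding h_def by blast
  moreover have "bdd_below ?R"
    by (rule bdd_belowI[of _ 0]) (auto simp: RKHS_D_norm_sq_def sum_nonneg)
  moreover have "RKHS_D_norm_sq G \<phi> D h \<le> real D * (l2norm G f\<^sub>0)\<^sup>2"
    using bessel_inequality[OF assms(2) f\<^sub>0_L2, of D]
    by (simp add: h_def RKHS_D_norm_sq_fourier_partial_sum[OF assms(2)] mult_left_mono)
  ultimately show ?thesis
    by (meson cInf_lower order_trans)
qed

end
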